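(* Let $(M,\widetilde B)$ be a root of unity quantum seed satisfying condition (Coprime). Then for every $k\in\mathrm{ex}$, $$M(e_k)^\ell\big(\mu_k(M)(e_k)\big)^\ell=\prod_{b_{ik}>0}\big(M(e_i)^\ell\big)^{b_{ik}}+\prod_{b_{ik}<0}\big(M(e_i)^\ell\big)^{-b_{ik}}.$$
   Context: Let $\ell$ be a positive integer, $\mathbb Z_\ell=\mathbb Z/\ell\mathbb Z$, $\varepsilon^{1/2}\in\mathbb C$ a primitive $\ell$-th root of unity, $\mathcal A^{1/2}_\varepsilon=\mathbb Z[\varepsilon^{1/2}]$, $\varepsilon^{a/2}=(\varepsilon^{1/2})^a$ for $a\in\mathbb Z_\ell$; $\overline C$ is the reduction mod $\ell$ of an integer matrix $C$; $e_1,\dots,e_N$ is the standard basis of $\mathbb Z^N$. For a skew-symmetric bilinear form $\Lambda:\mathbb Z^N\times\mathbb Z^N\to\mathbb Z_\ell$ with matrix $(\lambda_{ij})$, $\mathcal T_\varepsilon(\Lambda)$ is the $\mathcal A^{1/2}_\varepsilon$-algebra with basis $\{X^f\}_{f\in\mathbb Z^N}$ and $X^fX^g=\varepsilon^{\Lambda(f,g)/2}X^{f+g}$. A root of unity toric frame of a division algebra $\mathcal F$ over $\mathbb Q(\varepsilon^{1/2})$ is a map $M:\mathbb Z^N\to\mathcal F$ such that for some (unique) skew-symmetric $\Lambda=:\Lambda_M$ there is an injective $\mathcal A^{1/2}_\varepsilon$-algebra map $\phi:\mathcal T_\varepsilon(\Lambda)\to\mathcal F$, $\phi(X^f)=M(f)$,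 with $\mathcal F$ the skew field of fractions of its image. Fix $\mathrm{ex}\subseteq[1,N]$. An exchange matrix $\widetilde B=(b_{ij})$ is an integer matrix with rows indexed by $[1,N]$, columns by $\mathrm{ex}$, principal part $B$, $k$-th column $b^k\in\mathbb Z^N$. $(\Lambda,\widetilde B)$ is $\ell$-compatible if there is $D=\mathrm{diag}(d_j)_{j\in\mathrm{ex}}$, $d_j\in\mathbb Z_{>0}$, with $DB$ skew-symmetric and $\sum_k\overline b_{kj}\lambda_{ki}=\delta_{ij}\overline d_j$ in $\mathbb Z_\ell$ for all $i\in[1,N]$, $j\in\mathrm{ex}$. A root of unity quantum seed is $(M,\widetilde B)$ with $(\Lambda_M,\widetilde B)$ $\ell$-compatible. Condition (Coprime): $\ell$ is odd and coprime to all $d_k$, $k\in\mathrm{ex}$. For $b\in\mathbb Z^N$, $[b]_\pm$ keeps the entries $b_i$ with $\pm b_i\ge0$ and sets the others to $0$. The mutated frame satisfies $\mu_k(M)(e_k)=M(-e_k+[b^k]_+)+M(-e_k-[b^k]_-)$. *)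

theory Defs
  imports Complex_Main "HOL-Computational_Algebra.Polynomial" "HOL-Library.Function_Algebras"
begin

(* Z^N is modelled as functions 'n => int on a finite, linearly ordered index type 'n
   (playing the role of [1,N]); the linear order is only used to write the products
   of the (pairwise commuting) elements M(e_i)^l in the noncommutative ring F. *)

definition unitvec :: "'n \<Rightarrow> ('n \<Rightarrow> int)" where
  "unitvec k = (\<lambda>i. if i = k then 1 else 0)"

definition pos_part :: "('n \<Rightarrow> int) \<Rightarrow> ('n \<Rightarrow> int)" where
  "pos_part b = (\<lambda>i. if b i \<ge> 0 then b i else 0)"
definition neg_part :: "('n \<Rightarrow> int) \<Rightarrow> ('n \<Rightarrow> int)" where
  "neg_part b = (\<lambda>i. if b i \<le> 0 then b i else 0)"

definition col :: "('n \<Rightarrow> 'n \<Rightarrow> int) \<Rightarrow> 'n \<Rightarrow> ('n \<Rightarrow> int)" where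
  "col B k = (\<lambda>i. B i k)"

definition primitive_root :: "nat \<Rightarrow> complex \<Rightarrow> bool" where
  "primitive_root l z \<longleftrightarrow> 0 < l \<and> z ^ l = 1 \<and> (\<forall>m. 0 < m \<and> m < l \<longrightarrow> z ^ m \<noteq> 1)"

(* A^{1/2}_eps = Z[eps^{1/2}] and Q(eps^{1/2}) as subsets of C *)
definition Zring :: "complex \<Rightarrow> complex set" where
  "Zring z = {poly (map_poly of_int p) z | p :: int poly. True}"
definition Qfield :: "complex \<Rightarrow> complex set" where
  "Qfield z = {poly (map_poly of_rat p) z | p :: rat poly. True}"

(* F is a division algebra over Q(z): emb is a ring homomorphism from Q(z) into the
   centre of the division ring F *)
definition central_embedding :: "complex \<Rightarrow> (complex \<Rightarrow> 'a::division_ring) \<Rightarrow> bool" where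
  "central_embedding z emb \<longleftrightarrow>
     emb 1 = 1 \<and>
     (\<forall>x\<in>Qfield z. \<forall>y\<in>Qfield z. emb (x + y) = emb x + emb y \<and> emb (x * y) = emb x * emb y) \<and>
     (\<forall>x\<in>Qfield z. \<forall>a. emb x * a = a * emb x)"

(* eps^{a/2} = (eps^{1/2})^a for a in Z_l (a given by an integer representative) *)
definition eps_half :: "nat \<Rightarrow> complex \<Rightarrow> int \<Rightarrow> complex" where
  "eps_half l z a = z ^ nat (a mod int l)"

(* bilinear form Lambda : Z^N x Z^N -> Z_l with matrix lam (integer representatives mod l) *)
definition bform :: "('n::finite \<Rightarrow> 'n \<Rightarrow> int) \<Rightarrow> ('n \<Rightarrow> int) \<Rightarrow> ('n \<Rightarrow> int) \<Rightarrow> int" where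
  "bform lam f g = (\<Sum>i\<in>UNIV. \<Sum>j\<in>UNIV. f i * lam i j * g j)"

definition skew_mod :: "nat \<Rightarrow> ('n \<Rightarrow> 'n \<Rightarrow> int) \<Rightarrow> bool" where
  "skew_mod l lam \<longleftrightarrow> (\<forall>i j. (lam i j + lam j i) mod int l = 0)"

(* image of phi : T_eps(Lambda) -> F, i.e. A-linear combinations of the M(f) *)
definition frame_image :: "complex \<Rightarrow> (complex \<Rightarrow> 'a::division_ring) \<Rightarrow> (('n \<Rightarrow> int) \<Rightarrow> 'a) \<Rightarrow> 'a set" where
  "frame_image z emb M =
     {\<Sum>f\<in>S. emb (c f) * M f | S c. finite S \<and> (\<forall>f\<in>S. c f \<in> Zring z)}"

definition toric_frame ::
  "nat \<Rightarrow> complex \<Rightarrow> (complex \<Rightarrow> 'a::division_ring) \<Rightarrow> ('n::finite \<Rightarrow> 'n \<Rightarrow> int)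
     \<Rightarrow> (('n \<Rightarrow> int) \<Rightarrow> 'a) \<Rightarrow> bool" where
  "toric_frame l z emb lam M \<longleftrightarrow>
     skew_mod l lam \<and>
     \<comment> \<open>phi is a unital algebra map: phi(X^0) = 1, phi(X^f X^g) = phi(X^f) phi(X^g)\<close>
     M 0 = 1 \<and>
     (\<forall>f g. M f * M g = emb (eps_half l z (bform lam f g)) * M (f + g)) \<and>
     \<comment> \<open>phi is injective: the M(f) are linearly independent over A\<close>
     (\<forall>S c. finite S \<longrightarrow> (\<forall>f\<in>S. c f \<in> Zring z) \<longrightarrow>
        (\<Sum>f\<in>S. emb (c f) * M f) = 0 \<longrightarrow> (\<forall>f\<in>S. c f = 0)) \<and>
     \<comment> \<open>F is the skew field of fractions of the image\<close>
     (\<forall>x. \<exists>y w. y \<in> frame_image z emb M \<and> w \<in> frame_image z emb M \<and> w \<noteq> 0 \<and> x = y * inverse w)"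

definition l_compatible ::
  "nat \<Rightarrow> ('n::finite \<Rightarrow> 'n \<Rightarrow> int) \<Rightarrow> 'n set \<Rightarrow> ('n \<Rightarrow> 'n \<Rightarrow> int) \<Rightarrow> ('n \<Rightarrow> int) \<Rightarrow> bool" where
  "l_compatible l lam ex B d \<longleftrightarrow>
     (\<forall>j\<in>ex. d j > 0) \<and>
     (\<forall>i\<in>ex. \<forall>j\<in>ex. d i * B i j = - (d j * B j i)) \<and>
     (\<forall>i j. j \<in> ex \<longrightarrow> (\<Sum>k\<in>UNIV. B k j * lam k i) mod int l = (if i = j then d j else 0) mod int l)"

definition coprime_cond :: "nat \<Rightarrow> 'n set \<Rightarrow> ('n \<Rightarrow> int) \<Rightarrow> bool" where
  "coprime_cond l ex d \<longleftrightarrow> odd l \<and> (\<forall>k\<in>ex. coprime (int l) (d k))"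

definition mut_ek :: "(('n \<Rightarrow> int) \<Rightarrow> 'a::ring) \<Rightarrow> ('n \<Rightarrow> 'n \<Rightarrow> int) \<Rightarrow> 'n \<Rightarrow> 'a" where
  "mut_ek M B k = M (- unitvec k + pos_part (col B k)) + M (- unitvec k - neg_part (col B k))"

end

theory Submission
  imports Defs
begin

text \<open>Let \<open>u = M(-e\<^sub>k + [b\<^sup>k]\<^sub>+)\<close> and \<open>v = M(-e\<^sub>k - [b\<^sup>k]\<^sub>-)\<close> be the two summands of
  \<open>\<mu>\<^sub>k(M)(e\<^sub>k)\<close>. Compatibility gives \<open>\<Lambda>(v, u) \<equiv> d\<^sub>k\<close>, hence \<open>v u = q u v\<close> with
  \<open>q = \<epsilon>\<^bsup>d\<^sub>k\<^esup>\<close>, and under (Coprime) \<open>q\<close> is again a primitive \<open>l\<close>-th root of unity.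
  The \<open>q\<close>-binomial theorem expands \<open>(u + v)\<^bsup>l\<^esup>\<close>; the Gaussian binomials
  \<open>[l choose j]\<^sub>q\<close> with \<open>0 < j < l\<close> vanish at such \<open>q\<close>, leaving \<open>u\<^bsup>l\<^esup> + v\<^bsup>l\<^esup>\<close>.
  Since \<open>\<Lambda>\<close> takes values in \<open>\<int>\<^sub>l\<close>, \<open>l\<close>-th powers of frame elements multiply without
  twist, so \<open>M(e\<^sub>k)\<^bsup>l\<^esup> u\<^bsup>l\<^esup> = M(l [b\<^sup>k]\<^sub>+)\<close> and \<open>M(e\<^sub>k)\<^bsup>l\<^esup> v\<^bsup>l\<^esup> = M(-l [b\<^sup>k]\<^sub>-)\<close>,
  which are the two products on the right.\<close>

section \<open>Gaussian binomial coefficients\<close>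

fun qbinomial :: "'a::ring_1 \<Rightarrow> nat \<Rightarrow> nat \<Rightarrow> 'a" where
  "qbinomial q n 0 = 1"
| "qbinomial q 0 (Suc j) = 0"
| "qbinomial q (Suc n) (Suc j) = qbinomial q n j + q ^ Suc j * qbinomial q n (Suc j)"

lemma qbinomial_eq_0: "n < j \<Longrightarrow> qbinomial q n j = 0"
proof (induction n arbitrary: j)
  case 0
  then show ?case by (cases j) auto
next
  case (Suc n)
  then show ?case by (cases j) auto
qed

lemma qbinomial_diag [simp]: "qbinomial q n n = 1"
  by (induction n) (auto simp: qbinomial_eq_0)

lemma qbinomial_Suc:
  "qbinomial q (Suc n) j = (if j = 0 then 0 else qbinomial q n (j - 1)) + q ^ j * qbinomial q n j"
  by (cases j) auto

lemma qbinomial_commute: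
  assumes central: "\<And>a. q * a = a * q"
  shows "qbinomial q n j * a = a * qbinomial q n j"
proof (induction n arbitrary: j)
  case 0
  then show ?case by (cases j) auto
next
  case (Suc n)
  have "q ^ j * qbinomial q n j * a = q ^ j * (a * qbinomial q n j)"
    by (simp only: mult.assoc Suc.IH)
  also have "\<dots> = (q ^ j * a) * qbinomial q n j"
    by (simp only: mult.assoc)
  also have "\<dots> = a * (q ^ j * qbinomial q n j)"
    by (simp only: power_commuting_commutes[OF central] mult.assoc)
  finally show ?case
    using Suc.IH by (simp add: qbinomial_Suc distrib_left distrib_right)
qed

lemma qcommute_power:
  fixes q x y :: "'a::monoid_mult"
  assumes central: "\<And>a. q * a = a * q" and yx: "y * x = q * x * y"
  shows "y * x ^ j = q ^ j * x ^ j * y"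
proof (induction j)
  case (Suc j)
  have "y * x ^ Suc j = (y * x) * x ^ j"
    by (simp only: power_Suc mult.assoc)
  also have "\<dots> = q * x * (y * x ^ j)"
    by (simp only: yx mult.assoc)
  also have "\<dots> = q * (x * q ^ j) * x ^ j * y"
    by (simp only: Suc mult.assoc)
  also have "x * q ^ j = q ^ j * x"
    by (rule power_commuting_commutes[OF central, symmetric])
  finally show ?case
    by (simp add: mult.assoc)
qed simp

theorem qbinomial_theorem:
  assumes central: "\<And>a. q * a = a * q" and yx: "y * x = q * x * y"
  shows "(x + y) ^ n = (\<Sum>j\<le>n. qbinomial q n j * x ^ j * y ^ (n - j))"
proof (induction n)
  case (Suc n)
  let ?S = "\<Sum>j\<le>n. qbinomial q n j * x ^ j * y ^ (n - j)"
  have "x * ?S = (\<Sum>j\<le>n. qbinomial q n j * x ^ Suc j * y ^ (n - j))"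
    unfolding sum_distrib_left
  proof (intro sum.cong refl)
    fix j
    have "x * (qbinomial q n j * x ^ j * y ^ (n - j)) = (x * qbinomial q n j) * x ^ j * y ^ (n - j)"
      by (simp only: mult.assoc)
    also have "x * qbinomial q n j = qbinomial q n j * x"
      by (rule qbinomial_commute[OF central, symmetric])
    finally show "x * (qbinomial q n j * x ^ j * y ^ (n - j)) = qbinomial q n j * x ^ Suc j * y ^ (n - j)"
      by (simp only: mult.assoc power_Suc)
  qed
  also have "\<dots> = (\<Sum>j\<le>Suc n. (if j = 0 then 0 else qbinomial q n (j - 1)) * x ^ j * y ^ (Suc n - j))"
    by (subst sum.atMost_Suc_shift) simp
  finally have x_part: "x * ?S = \<dots>" .
  have "y * ?S = (\<Sum>j\<le>n. q ^ j * qbinomial q n j * x ^ j * y ^ (Suc n - j))"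
    unfolding sum_distrib_left
  proof (intro sum.cong refl)
    fix j
    assume "j \<in> {..n}"
    have "y * (qbinomial q n j * x ^ j * y ^ (n - j)) = (y * qbinomial q n j) * x ^ j * y ^ (n - j)"
      by (simp only: mult.assoc)
    also have "y * qbinomial q n j = qbinomial q n j * y"
      by (rule qbinomial_commute[OF central, symmetric])
    also have "qbinomial q n j * y * x ^ j * y ^ (n - j) = qbinomial q n j * (y * x ^ j) * y ^ (n - j)"
      by (simp only: mult.assoc)
    also have "y * x ^ j = q ^ j * x ^ j * y"
      by (rule qcommute_power[OF central yx])
    also have "qbinomial q n j * (q ^ j * x ^ j * y) * y ^ (n - j)
        = (qbinomial q n j * q ^ j) * x ^ j * (y * y ^ (n - j))"
      by (simp only: mult.assoc)
    also have "qbinomial q n j * q ^ j = q ^ j * qbinomial q n j"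
      by (rule qbinomial_commute[OF central])
    also have "y * y ^ (n - j) = y ^ (Suc n - j)"
      using \<open>j \<in> {..n}\<close> by (simp add: Suc_diff_le)
    finally show "y * (qbinomial q n j * x ^ j * y ^ (n - j))
        = q ^ j * qbinomial q n j * x ^ j * y ^ (Suc n - j)" .
  qed
  also have "\<dots> = (\<Sum>j\<le>Suc n. q ^ j * qbinomial q n j * x ^ j * y ^ (Suc n - j))"
    by (simp add: qbinomial_eq_0)
  finally have y_part: "y * ?S = \<dots>" .
  have "(x + y) ^ Suc n = x * ?S + y * ?S"
    by (simp add: Suc distrib_right)
  also have "\<dots> = (\<Sum>j\<le>Suc n. qbinomial q (Suc n) j * x ^ j * y ^ (Suc n - j))"
    unfolding x_part y_part qbinomial_Suc by (simp add: distrib_right sum.distrib)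
  finally show ?case .
qed simp

definition qpochhammer :: "'a::comm_ring_1 \<Rightarrow> nat \<Rightarrow> 'a" where
  "qpochhammer q m = (\<Prod>i=1..m. 1 - q ^ i)"

lemma qpochhammer_0 [simp]: "qpochhammer q 0 = 1"
  by (simp add: qpochhammer_def)

lemma qpochhammer_Suc: "qpochhammer q (Suc m) = qpochhammer q m * (1 - q ^ Suc m)"
  unfolding qpochhammer_def by (simp add: prod.nat_ivl_Suc' mult.commute)

lemma qbinomial_qpochhammer:
  fixes q :: "'a::comm_ring_1"
  assumes "j \<le> n"
  shows "qbinomial q n j * qpochhammer q j * qpochhammer q (n - j) = qpochhammer q n"
  using assms
proof (induction n arbitrary: j)
  case (Suc n)
  show ?case
  proof (cases j)
    case (Suc i)
    show ?thesis
    proof (cases "i < n")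
      case True
      have IH_i: "qbinomial q n i * qpochhammer q i * qpochhammer q (n - i) = qpochhammer q n"
        and IH_Suc_i: "qbinomial q n (Suc i) * qpochhammer q (Suc i) * qpochhammer q (n - Suc i)
          = qpochhammer q n"
        using Suc.IH True by simp_all
      have n_minus_i: "n - i = Suc (n - Suc i)"
        using True by simp
      have "q ^ Suc i * q ^ (n - i) = q ^ (Suc i + (n - i))"
        by (simp only: power_add)
      also have "Suc i + (n - i) = Suc n"
        using True by simp
      finally have pascal: "(1 - q ^ Suc i) + q ^ Suc i * (1 - q ^ (n - i)) = 1 - q ^ Suc n"
        by (simp add: algebra_simps)
      have "qbinomial q (Suc n) j * qpochhammer q j * qpochhammer q (Suc n - j)
          = (qbinomial q n i + q ^ Suc i * qbinomial q n (Suc i))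
              * (qpochhammer q i * (1 - q ^ Suc i)) * qpochhammer q (n - i)"
        using Suc by (simp add: qpochhammer_Suc)
      also have "\<dots> = (qbinomial q n i * qpochhammer q i * qpochhammer q (n - i)) * (1 - q ^ Suc i)
          + q ^ Suc i * (qbinomial q n (Suc i) * qpochhammer q (Suc i) * qpochhammer q (n - Suc i))
              * (1 - q ^ (n - i))"
        unfolding n_minus_i qpochhammer_Suc by (simp add: algebra_simps)
      also have "\<dots> = qpochhammer q n * (1 - q ^ Suc n)"
        unfolding IH_i IH_Suc_i pascal[symmetric] by (simp add: algebra_simps)
      finally show ?thesis
        by (simp add: qpochhammer_Suc)
    next
      case False
      then have "j = Suc n"
        using Suc Suc.prems by simp
      then show ?thesis
        by simp
    qed
  qed simp
qed simp

text \<open>At a primitive \<open>l\<close>-th root of unity the \<open>q\<close>-Pochhammer symbol vanishes exactly from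
  \<open>l\<close> on, so the factorial formula forces the inner Gaussian binomials to vanish.\<close>

lemma qbinomial_root_of_unity_eq_0:
  fixes q :: "'a::idom"
  assumes root: "q ^ l = 1" and primitive: "\<And>i. 0 < i \<Longrightarrow> i < l \<Longrightarrow> q ^ i \<noteq> 1"
    and "0 < j" "j < l"
  shows "qbinomial q l j = 0"
proof -
  have nonzero: "qpochhammer q m \<noteq> 0" if "m < l" for m
    using primitive that unfolding qpochhammer_def by (subst prod_zero_iff) auto
  have "qpochhammer q l = 0"
    using root \<open>j < l\<close> unfolding qpochhammer_def by (subst prod_zero_iff) auto
  then have "qbinomial q l j * qpochhammer q j * qpochhammer q (l - j) = 0"
    using qbinomial_qpochhammer[of j l q] \<open>j < l\<close> by simp
  then show ?thesis
    using nonzero[of j] nonzero[of "l - j"] \<open>0 < j\<close> \<open>j < l\<close> by simp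
qed

lemma power_add_qcommuting:
  assumes central: "\<And>a. q * a = a * q" and yx: "y * x = q * x * y"
    and vanish: "\<And>j. 0 < j \<Longrightarrow> j < n \<Longrightarrow> qbinomial q n j = 0" and "0 < n"
  shows "(x + y) ^ n = x ^ n + y ^ n"
proof -
  have "(x + y) ^ n = (\<Sum>j\<in>{0, n}. qbinomial q n j * x ^ j * y ^ (n - j))"
    unfolding qbinomial_theorem[OF central yx]
    by (rule sum.mono_neutral_right) (auto simp: vanish)
  then show ?thesis
    using \<open>0 < n\<close> by (simp add: add.commute)
qed

section \<open>Primitive roots of unity\<close>

lemma primitive_root_power_mod:
  assumes "primitive_root l z"
  shows "z ^ n = z ^ (n mod l)"
proof -
  have "z ^ n = z ^ (l * (n div l) + n mod l)"
    by simp
  also have "\<dots> = (z ^ l) ^ (n div l) * z ^ (n mod l)"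
    by (simp only: power_add power_mult)
  finally show ?thesis
    using assms by (simp add: primitive_root_def)
qed

lemma primitive_root_dvd:
  assumes "primitive_root l z" and "z ^ n = 1"
  shows "l dvd n"
proof (rule ccontr)
  assume "\<not> l dvd n"
  then have "0 < n mod l" and "n mod l < l"
    using assms(1) by (simp_all add: primitive_root_def dvd_eq_mod_eq_0)
  moreover have "z ^ (n mod l) = 1"
    using assms primitive_root_power_mod by metis
  ultimately show False
    using assms(1) by (auto simp: primitive_root_def)
qed

lemma primitive_root_power:
  assumes "primitive_root l z" and "coprime l m"
  shows "primitive_root l (z ^ m)"
  unfolding primitive_root_def
proof (intro conjI allI impI)
  have "(z ^ m) ^ l = (z ^ l) ^ m"
    by (simp flip: power_mult add: mult.commute)
  then show "0 < l" and "(z ^ m) ^ l = 1"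
    using assms(1) by (simp_all add: primitive_root_def)
next
  fix i
  assume i: "0 < i \<and> i < l"
  show "(z ^ m) ^ i \<noteq> 1"
  proof
    assume "(z ^ m) ^ i = 1"
    then have "l dvd m * i"
      using primitive_root_dvd[OF assms(1)] by (simp add: power_mult)
    then have "l dvd i"
      using assms(2) coprime_dvd_mult_right_iff by blast
    with i show False
      by (auto dest: dvd_imp_le)
  qed
qed

section \<open>The field \<open>\<rat>(\<epsilon>\<^bsup>1/2\<^esup>)\<close> and its central embedding\<close>

lemma Qfield_poly: "(\<And>i. coeff p i \<in> \<rat>) \<Longrightarrow> poly p z \<in> Qfield z"
  by (erule ratpolyE) (auto simp: Qfield_def)

lemma QfieldE:
  assumes "x \<in> Qfield z"
  obtains p where "\<And>i. coeff p i \<in> \<rat>" and "x = poly p z"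
proof -
  obtain r where "x = poly (map_poly of_rat r) z"
    using assms by (auto simp: Qfield_def)
  then show thesis
    by (intro that[of "map_poly of_rat r"]) (simp_all add: coeff_map_poly)
qed

lemma Qfield_add:
  assumes "x \<in> Qfield z" and "y \<in> Qfield z"
  shows "x + y \<in> Qfield z"
proof -
  obtain p r where "\<And>i. coeff p i \<in> \<rat>" "x = poly p z" "\<And>i. coeff r i \<in> \<rat>" "y = poly r z"
    using assms by (metis QfieldE)
  then show ?thesis
    using Qfield_poly[of "p + r" z] by simp
qed

lemma Qfield_mult:
  assumes "x \<in> Qfield z" and "y \<in> Qfield z"
  shows "x * y \<in> Qfield z"
proof -
  obtain p r where "\<And>i. coeff p i \<in> \<rat>" "x = poly p z" "\<And>i. coeff r i \<in> \<rat>" "y = poly r z"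
    using assms by (metis QfieldE)
  then show ?thesis
    using Qfield_poly[of "p * r" z] by (simp add: coeff_mult Rats_mult Rats_sum)
qed

lemma Qfield_power_base: "z ^ n \<in> Qfield z"
  using Qfield_poly[of "monom 1 n" z] by (simp add: coeff_monom poly_monom)

lemma Qfield_0: "0 \<in> Qfield z"
  using Qfield_poly[of 0 z] by simp

lemma Qfield_1: "1 \<in> Qfield z"
  using Qfield_power_base[of z 0] by simp

lemma Qfield_power: "x \<in> Qfield z \<Longrightarrow> x ^ n \<in> Qfield z"
  by (induction n) (simp_all add: Qfield_1 Qfield_mult)

lemma Qfield_qbinomial: "q \<in> Qfield z \<Longrightarrow> qbinomial q n j \<in> Qfield z"
proof (induction n arbitrary: j)
  case 0
  then show ?case by (cases j) (simp_all add: Qfield_0 Qfield_1)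
next
  case (Suc n)
  then show ?case by (cases j) (simp_all add: Qfield_1 Qfield_add Qfield_mult Qfield_power)
qed

context
  fixes z :: complex and emb :: "complex \<Rightarrow> 'a::division_ring"
  assumes emb: "central_embedding z emb"
begin

lemma central_embedding_1: "emb 1 = 1"
  using emb unfolding central_embedding_def by blast

lemma central_embedding_add: "x \<in> Qfield z \<Longrightarrow> y \<in> Qfield z \<Longrightarrow> emb (x + y) = emb x + emb y"
  using emb unfolding central_embedding_def by blast

lemma central_embedding_mult: "x \<in> Qfield z \<Longrightarrow> y \<in> Qfield z \<Longrightarrow> emb (x * y) = emb x * emb y"
  using emb unfolding central_embedding_def by blast

lemma central_embedding_commute: "x \<in> Qfield z \<Longrightarrow> emb x * a = a * emb x"
  using emb unfolding central_embedding_def by blast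

lemma central_embedding_0: "emb 0 = 0"
  using central_embedding_add[OF Qfield_0 Qfield_0] by simp

lemma central_embedding_power:
  assumes "x \<in> Qfield z"
  shows "emb (x ^ n) = emb x ^ n"
proof (induction n)
  case (Suc n)
  then show ?case
    using central_embedding_mult[OF assms Qfield_power[OF assms]] by simp
qed (simp add: central_embedding_1)

lemma central_embedding_qbinomial:
  assumes "q \<in> Qfield z"
  shows "emb (qbinomial q n j) = qbinomial (emb q) n j"
proof (induction n arbitrary: j)
  case 0
  then show ?case by (cases j) (simp_all add: central_embedding_0 central_embedding_1)
next
  case (Suc n)
  have "emb (qbinomial q n j' + q ^ Suc j' * qbinomial q n (Suc j'))
      = emb (qbinomial q n j') + emb q ^ Suc j' * emb (qbinomial q n (Suc j'))" for j'
    using assms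
    by (simp add: central_embedding_add central_embedding_mult central_embedding_power
        Qfield_mult Qfield_power Qfield_qbinomial)
  then show ?case
    using Suc.IH by (cases j) (simp_all add: central_embedding_1)
qed

end

section \<open>The bilinear form \<open>\<Lambda>\<close>\<close>

lemma bform_diff_left: "bform lam (f - g) h = bform lam f h - bform lam g h"
  unfolding bform_def by (simp add: left_diff_distrib sum_subtractf)

lemma bform_smult_left: "bform lam (\<lambda>i. c * f i) g = c * bform lam f g"
  unfolding bform_def by (simp add: sum_distrib_left mult.assoc)

lemma bform_smult_right: "bform lam f (\<lambda>i. c * g i) = c * bform lam f g"
  unfolding bform_def by (simp add: sum_distrib_left algebra_simps)

lemma bform_skew:
  assumes "skew_mod l lam"
  shows "int l dvd bform lam f g + bform lam g f"
proof -
  have "bform lam g f = (\<Sum>i\<in>UNIV. \<Sum>j\<in>UNIV. f i * g j * lam j i)"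
    unfolding bform_def by (subst sum.swap) (simp add: ac_simps)
  then have "bform lam f g + bform lam g f = (\<Sum>i\<in>UNIV. \<Sum>j\<in>UNIV. f i * g j * (lam i j + lam j i))"
    unfolding bform_def by (simp add: distrib_left sum.distrib ac_simps)
  moreover have "int l dvd (\<Sum>i\<in>UNIV. \<Sum>j\<in>UNIV. f i * g j * (lam i j + lam j i))"
    using assms unfolding skew_mod_def by (intro dvd_sum dvd_mult) (simp add: dvd_eq_mod_eq_0)
  ultimately show ?thesis by simp
qed

lemma bform_self:
  assumes "skew_mod l lam" and "odd l"
  shows "int l dvd bform lam f f"
proof -
  have "int l dvd 2 * bform lam f f"
    using bform_skew[OF assms(1), of f f] by (simp only: mult_2)
  moreover have "coprime (int l) 2"
    using \<open>odd l\<close> by simp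
  ultimately show ?thesis
    using coprime_dvd_mult_right_iff by blast
qed

lemma bform_col:
  assumes "\<forall>i. (\<Sum>a\<in>UNIV. B a k * lam a i) mod int l = (if i = k then d else 0) mod int l"
  shows "int l dvd bform lam (col B k) f - f k * d"
proof -
  have "bform lam (col B k) f = (\<Sum>j\<in>UNIV. (\<Sum>a\<in>UNIV. B a k * lam a j) * f j)"
    unfolding bform_def col_def by (subst sum.swap) (simp add: sum_distrib_right)
  moreover have "f k * d = (\<Sum>j\<in>UNIV. (if j = k then d else 0) * f j)"
    by (subst sum.cong[OF refl, of _ _ "\<lambda>j. if j = k then d * f j else 0"]) auto
  ultimately have "bform lam (col B k) f - f k * d
      = (\<Sum>j\<in>UNIV. ((\<Sum>a\<in>UNIV. B a k * lam a j) - (if j = k then d else 0)) * f j)"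
    by (simp add: sum_subtractf left_diff_distrib)
  moreover have "int l dvd \<dots>"
    using assms by (intro dvd_sum dvd_mult2) (simp add: mod_eq_dvd_iff)
  ultimately show ?thesis by simp
qed

lemma bform_diff_col_self:
  assumes "skew_mod l lam" and "odd l"
    and "\<forall>i. (\<Sum>a\<in>UNIV. B a k * lam a i) mod int l = (if i = k then d else 0) mod int l"
  shows "int l dvd bform lam (f - col B k) f + f k * d"
proof -
  have "bform lam (f - col B k) f + f k * d = bform lam f f - (bform lam (col B k) f - f k * d)"
    by (simp add: bform_diff_left)
  also have "int l dvd \<dots>"
    by (rule dvd_diff[OF bform_self[OF assms(1,2)] bform_col[of B k lam l d, OF assms(3)]])
  finally show ?thesis .
qed

section \<open>Toric frames at a root of unity\<close>

locale root_of_unity_frame =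
  fixes l :: nat and z :: complex and emb :: "complex \<Rightarrow> 'a::division_ring"
    and lam :: "'n::finite \<Rightarrow> 'n \<Rightarrow> int" and M :: "('n \<Rightarrow> int) \<Rightarrow> 'a"
  assumes primitive: "primitive_root l z" and odd: "odd l"
    and emb: "central_embedding z emb" and skew: "skew_mod l lam"
    and M_0: "M 0 = 1"
    and M_mult: "M f * M g = emb (eps_half l z (bform lam f g)) * M (f + g)"
begin

definition twist :: "int \<Rightarrow> 'a" where
  "twist a = emb (eps_half l z a)"

lemma l_pos: "0 < l"
  using primitive by (simp add: primitive_root_def)

lemma eps_half_Qfield: "eps_half l z a \<in> Qfield z"
  unfolding eps_half_def by (rule Qfield_power_base)

lemma twist_commute: "twist a * x = x * twist a"
  unfolding twist_def by (rule central_embedding_commute[OF emb eps_half_Qfield])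

lemma eps_half_add: "eps_half l z a * eps_half l z b = eps_half l z (a + b)"
proof -
  have "int ((nat (a mod int l) + nat (b mod int l)) mod l) = (a + b) mod int l"
    using l_pos by (simp add: of_nat_mod mod_add_eq)
  then have sum_mod: "(nat (a mod int l) + nat (b mod int l)) mod l = nat ((a + b) mod int l)"
    by linarith
  have "eps_half l z a * eps_half l z b = z ^ (nat (a mod int l) + nat (b mod int l))"
    unfolding eps_half_def by (simp add: power_add)
  also have "\<dots> = eps_half l z (a + b)"
    unfolding eps_half_def by (subst primitive_root_power_mod[OF primitive]) (simp only: sum_mod)
  finally show ?thesis .
qed

lemma twist_add: "twist a * twist b = twist (a + b)"
  unfolding twist_def
  by (simp add: central_embedding_mult[OF emb eps_half_Qfield eps_half_Qfield, symmetric] eps_half_add)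

lemma twist_cong:
  assumes "int l dvd a - b"
  shows "twist a = twist b"
proof -
  have "a mod int l = b mod int l"
    using assms by (simp add: mod_eq_dvd_iff)
  then show ?thesis
    by (simp add: twist_def eps_half_def)
qed

lemma twist_dvd: "int l dvd a \<Longrightarrow> twist a = 1"
  using twist_cong[of a 0] central_embedding_1[OF emb] by (simp add: twist_def eps_half_def)

lemma twist_qbinomial_eq_0:
  assumes "coprime (int l) a" and "0 < j" and "j < l"
  shows "qbinomial (twist a) l j = 0"
proof -
  define m where "m = nat (a mod int l)"
  have "int m = a mod int l"
    using l_pos by (simp add: m_def)
  moreover have "coprime (int l) (a mod int l)"
    using assms(1) l_pos by simp
  ultimately have "coprime l m"
    by (metis coprime_int_iff)
  then have "primitive_root l (z ^ m)"
    by (rule primitive_root_power[OF primitive])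
  then have "qbinomial (z ^ m) l j = 0"
    using assms(2,3) by (intro qbinomial_root_of_unity_eq_0) (auto simp: primitive_root_def)
  moreover have "qbinomial (twist a) l j = emb (qbinomial (z ^ m) l j)"
    unfolding twist_def eps_half_def m_def
    by (rule central_embedding_qbinomial[OF emb Qfield_power_base, symmetric])
  ultimately show ?thesis
    using central_embedding_0[OF emb] by simp
qed

lemma M_mult_twist: "M f * M g = twist (bform lam f g) * M (f + g)"
  unfolding twist_def by (rule M_mult)

text \<open>As \<open>twist a = \<epsilon>\<^bsup>a/2\<^esup>\<close>, the factor here is \<open>\<epsilon>\<^bsup>\<Lambda>(g, f)\<^esup>\<close>; it arises from
  \<open>\<Lambda>(g, f) \<equiv> -\<Lambda>(f, g)\<close>.\<close>

lemma M_commute: "M g * M f = twist (2 * bform lam g f) * M f * M g"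
proof -
  have "twist (2 * bform lam g f) * M f * M g = twist (2 * bform lam g f + bform lam f g) * M (f + g)"
    by (simp add: mult.assoc M_mult_twist flip: twist_add)
  also have "twist (2 * bform lam g f + bform lam f g) = twist (bform lam g f)"
    using bform_skew[OF skew, of g f] by (intro twist_cong) (simp add: algebra_simps)
  also have "twist (bform lam g f) * M (f + g) = M g * M f"
    by (simp only: M_mult_twist add.commute)
  finally show ?thesis
    by (rule sym)
qed

lemma M_mult_dvd: "int l dvd bform lam f g \<Longrightarrow> M f * M g = M (f + g)"
  by (simp add: M_mult_twist twist_dvd)

lemma M_power: "M f ^ n = M (\<lambda>i. int n * f i)"
proof (induction n)
  case 0
  then show ?case
    using M_0 by (simp add: zero_fun_def)
next
  case (Suc n)
  have "int l dvd bform lam f (\<lambda>i. int n * f i)"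
    using bform_self[OF skew odd, of f] by (simp add: bform_smult_right)
  then have "M f * M (\<lambda>i. int n * f i) = M (f + (\<lambda>i. int n * f i))"
    by (rule M_mult_dvd)
  then show ?case
    using Suc by (simp add: algebra_simps plus_fun_def)
qed

lemma M_scaled_mult: "M (\<lambda>i. int l * f i) * M (\<lambda>i. int l * g i) = M (\<lambda>i. int l * (f i + g i))"
proof -
  have "int l dvd bform lam (\<lambda>i. int l * f i) (\<lambda>i. int l * g i)"
    by (simp add: bform_smult_left bform_smult_right)
  then show ?thesis
    by (simp add: M_mult_dvd plus_fun_def algebra_simps)
qed

lemma prod_list_power_unitvec:
  "distinct xs \<Longrightarrow> prod_list (map (\<lambda>i. (M (unitvec i) ^ l) ^ c i) xs)
     = M (\<lambda>j. int l * (if j \<in> set xs then int (c j) else 0))"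
proof (induction xs)
  case Nil
  then show ?case
    using M_0 by (simp add: zero_fun_def)
next
  case (Cons a xs)
  have "(M (unitvec a) ^ l) ^ c a = M (\<lambda>i. int (c a) * (int l * unitvec a i))"
    by (simp add: M_power)
  also have "(\<lambda>i. int (c a) * (int l * unitvec a i)) = (\<lambda>j. int l * (if j = a then int (c a) else 0))"
    by (simp add: fun_eq_iff unitvec_def)
  finally have "prod_list (map (\<lambda>i. (M (unitvec i) ^ l) ^ c i) (a # xs))
      = M (\<lambda>j. int l * ((if j = a then int (c a) else 0) + (if j \<in> set xs then int (c j) else 0)))"
    using Cons by (simp add: M_scaled_mult)
  also have "(\<lambda>j. int l * ((if j = a then int (c a) else 0) + (if j \<in> set xs then int (c j) else 0)))
      = (\<lambda>j. int l * (if j \<in> set (a # xs) then int (c j) else 0))"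
    using Cons.prems by (auto simp: fun_eq_iff)
  finally show ?case .
qed

lemma mutation_power:
  assumes compat: "\<forall>i. (\<Sum>a\<in>UNIV. B a k * lam a i) mod int l = (if i = k then d else 0) mod int l"
    and "B k k = 0" and "coprime (int l) d"
  shows "M (unitvec k) ^ l * mut_ek M B k ^ l
       = M (\<lambda>j. int l * pos_part (col B k) j) + M (\<lambda>j. int l * - neg_part (col B k) j)"
proof -
  define u where "u = - unitvec k + pos_part (col B k)"
  define v where "v = - unitvec k - neg_part (col B k)"
  have "v = u - col B k" and "u k = -1"
    using \<open>B k k = 0\<close> by (auto simp: fun_eq_iff u_def v_def unitvec_def pos_part_def neg_part_def col_def)
  then have "int l dvd bform lam v u - d"
    using bform_diff_col_self[where B = B and k = k and d = d and f = u, OF skew odd compat] by simp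
  then have "int l dvd 2 * (bform lam v u - d)"
    by (rule dvd_mult)
  then have "twist (2 * bform lam v u) = twist (2 * d)"
    by (intro twist_cong) (simp add: right_diff_distrib)
  then have vu: "M v * M u = twist (2 * d) * M u * M v"
    using M_commute[of v u] by simp
  have "coprime (int l) (2 * d)"
    using \<open>coprime (int l) d\<close> odd by simp
  then have "(M u + M v) ^ l = M u ^ l + M v ^ l"
    by (intro power_add_qcommuting[OF twist_commute vu] twist_qbinomial_eq_0 l_pos)
  then show ?thesis
    by (simp add: mut_ek_def u_def v_def distrib_left M_power M_scaled_mult)
qed

end

theorem proposition4p4:
  fixes l :: nat and z :: complex and emb :: "complex \<Rightarrow> 'a::division_ring"
    and lam :: "'n::{finite,linorder} \<Rightarrow> 'n \<Rightarrow> int"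
    and M :: "('n \<Rightarrow> int) \<Rightarrow> 'a"
    and ex :: "'n set" and B :: "'n \<Rightarrow> 'n \<Rightarrow> int" and d :: "'n \<Rightarrow> int"
    and k :: 'n
  assumes "primitive_root l z"
    and "central_embedding z emb"
    and "toric_frame l z emb lam M"
    and "l_compatible l lam ex B d"
    and "coprime_cond l ex d"
    and "k \<in> ex"
  shows "M (unitvec k) ^ l * (mut_ek M B k) ^ l =
           prod_list (map (\<lambda>i. (M (unitvec i) ^ l) ^ nat (B i k))
                          (sorted_list_of_set {i. B i k > 0}))
         + prod_list (map (\<lambda>i. (M (unitvec i) ^ l) ^ nat (- B i k))
                          (sorted_list_of_set {i. B i k < 0}))"
proof -
  have "odd l" and coprime: "coprime (int l) (d k)"
    using assms(5,6) by (auto simp: coprime_cond_def)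
  interpret root_of_unity_frame l z emb lam M
    using assms(1-3) \<open>odd l\<close> unfolding toric_frame_def by unfold_locales blast+
  have "d k > 0" and "d k * B k k = - (d k * B k k)"
    and compat: "\<forall>i. (\<Sum>a\<in>UNIV. B a k * lam a i) mod int l = (if i = k then d k else 0) mod int l"
    using assms(4,6) unfolding l_compatible_def by blast+
  then have "B k k = 0"
    by simp
  have "prod_list (map (\<lambda>i. (M (unitvec i) ^ l) ^ nat (B i k)) (sorted_list_of_set {i. B i k > 0}))
      = M (\<lambda>j. int l * pos_part (col B k) j)"
    by (simp add: prod_list_power_unitvec pos_part_def col_def) (auto intro!: arg_cong[where f = M])
  moreover have "prod_list (map (\<lambda>i. (M (unitvec i) ^ l) ^ nat (- B i k)) (sorted_list_of_set {i. B i k < 0}))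
      = M (\<lambda>j. int l * - neg_part (col B k) j)"
    by (simp add: prod_list_power_unitvec neg_part_def col_def) (auto intro!: arg_cong[where f = M])
  ultimately show ?thesis
    using mutation_power[where B = B and k = k, OF compat \<open>B k k = 0\<close> coprime] by simp
qed

end
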